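(* For every $n\ge1$, $N=2^n$ and $i\in[1..2N]$, let $R_{N,i}$ be the $i$-th row of $\mathsf{ShiftBin}_N$ (a string of length $N(n+2)$). Then every 1D SLP deriving a string that contains $R_{N,i}$ as a substring has size at least $\min\{i,\,2N-i+1\}$.
   Context: Alphabet $\Sigma\supseteq\{0,1,\$\}$. For $N=2^n$, $\mathsf{Bin}_N$ is the $N\times(n+2)$ 2D string (array) whose $i$-th row ($i\in[1..N]$) is $\$\,b_{i-1}\,\$$, where $b_{i-1}$ is the $n$-bit binary representation of $i-1$. $\mathsf{ShiftBin}_N$ is the $2N\times N(n+2)$ array such that for each $j\in[1..N]$, the subarray formed by rows $j,\dots,j+N-1$ and columns $(j-1)(n+2)+1,\dots,j(n+2)$ equals $\mathsf{Bin}_N$, and all other entries are $0$. A 1D SLP is a triple $(\mathcal V,\mathcal S,\rho)$ with a finite set $\mathcal V$ of nonterminals, a start $\mathcal S\in\mathcal V$, and productions $\rho(X)$ each either a character of $\Sigma$ or a concatenation $YZ$ of two nonterminals, with acyclic occurrence relation; it derives the string obtained by recursively expanding $\mathcal S$. Its size is the total number of symbols (nonterminals and characters) on all right-hand sides. *)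

theory Defs
  imports Main "HOL-Library.Sublist"
begin

datatype ('a, 'v) rhs = Term 'a | Cat 'v 'v

definition occ_rel :: "'v set \<Rightarrow> ('v \<Rightarrow> ('a, 'v) rhs) \<Rightarrow> ('v \<times> 'v) set" where
  "occ_rel V \<rho> = {(X, Y). X \<in> V \<and> (\<exists>Z. \<rho> X = Cat Y Z \<or> \<rho> X = Cat Z Y)}"

definition is_slp :: "'v set \<Rightarrow> 'v \<Rightarrow> ('v \<Rightarrow> ('a, 'v) rhs) \<Rightarrow> bool" where
  "is_slp V S \<rho> \<longleftrightarrow> finite V \<and> S \<in> V \<and>
     (\<forall>X\<in>V. \<forall>Y Z. \<rho> X = Cat Y Z \<longrightarrow> Y \<in> V \<and> Z \<in> V) \<and>
     acyclic (occ_rel V \<rho>)"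

inductive derives :: "('v \<Rightarrow> ('a, 'v) rhs) \<Rightarrow> 'v \<Rightarrow> 'a list \<Rightarrow> bool" for \<rho> where
  derives_term: "\<rho> X = Term c \<Longrightarrow> derives \<rho> X [c]"
| derives_cat: "\<rho> X = Cat Y Z \<Longrightarrow> derives \<rho> Y u \<Longrightarrow> derives \<rho> Z v \<Longrightarrow> derives \<rho> X (u @ v)"

definition slp_size :: "'v set \<Rightarrow> ('v \<Rightarrow> ('a, 'v) rhs) \<Rightarrow> nat" where
  "slp_size V \<rho> = (\<Sum>X\<in>V. case \<rho> X of Term _ \<Rightarrow> 1 | Cat _ _ \<Rightarrow> 2)"

text \<open>Row r (1-indexed, r in [1..2N]) of ShiftBin_N with N = 2^n, as a list of length N(n+2),
  over characters c0 ('0'), c1 ('1'), cd ('$').  Column c' (0-indexed) lies in block j = c' div (n+2) + 1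
  at offset k = c' mod (n+2) + 1.  The block is Bin_N placed at rows j..j+N-1; its row r-j+1
  is $ b_{r-j} $, with b the n-bit binary representation, most significant bit first.\<close>
definition shiftbin_row :: "'a \<Rightarrow> 'a \<Rightarrow> 'a \<Rightarrow> nat \<Rightarrow> nat \<Rightarrow> 'a list" where
  "shiftbin_row c0 c1 cd n r =
     map (\<lambda>c'. let j' = c' div (n + 2); k' = c' mod (n + 2) in
                 if j' < r \<and> r \<le> j' + 2 ^ n then
                   (if k' = 0 \<or> k' = n + 1 then cd
                    else if (r - j' - 1) div 2 ^ (n - k') mod 2 = 1 then c1 else c0)
                 else c0)
         [0..<2 ^ n * (n + 2)]"

end

(* Cut the row into N = 2^n blocks of length n + 2; block j is $ b_(i-j-1) $ when j < i <= j + N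
   and all zeros otherwise.  Every nonzero block other than the first occurs exactly once in the
   row as a factor of length n + 2.  Each occurrence of such a block in the derived string is split
   strictly inside by some binary nonterminal.  If blocks j < k shared that nonterminal, its other
   occurrence, around block j, would contain a copy of block k starting less than one block length
   away from block j, hence inside the row and elsewhere than block k.  So the min(i, N) -
   max(1, i - N) such blocks need as many distinct binary nonterminals, each contributing 2 to
   the size; together with size >= 1 this gives the bound. *)

theory Submission
  imports Defs
begin

lemma derives_unique: "derives \<rho> X u \<Longrightarrow> derives \<rho> X v \<Longrightarrow> u = v"
proof (induction arbitrary: v rule: derives.induct)
  case (derives_term X c)
  have X: "\<rho> X = Term c" by fact
  from derives_term.prems show ?case
    by cases (simp_all add: X)
next
  case (derives_cat X Y Z u1 u2)
  have X: "\<rho> X = Cat Y Z" by fact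
  note IH = derives_cat.IH
  from derives_cat.prems show ?case
    by cases (simp_all add: X IH)
qed

definition cat_nonterminals :: "'v set \<Rightarrow> ('v \<Rightarrow> ('a, 'v) rhs) \<Rightarrow> 'v set" where
  "cat_nonterminals V \<rho> = {X \<in> V. \<exists>Y Z. \<rho> X = Cat Y Z}"

lemma slp_size_eq_card:
  assumes "finite V"
  shows "slp_size V \<rho> = card V + card (cat_nonterminals V \<rho>)"
proof -
  have "slp_size V \<rho> = (\<Sum>X\<in>V. 1 + (if \<exists>Y Z. \<rho> X = Cat Y Z then 1 else 0))"
    unfolding slp_size_def by (intro sum.cong) (auto split: rhs.split)
  also have "\<dots> = card V + (\<Sum>X\<in>V. if \<exists>Y Z. \<rho> X = Cat Y Z then 1 else 0)"
    by (simp only: sum.distrib card_eq_sum)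
  also have "\<dots> = card V + card (cat_nonterminals V \<rho>)"
    using assms by (simp add: sum.inter_filter[symmetric] cat_nonterminals_def)
  finally show ?thesis .
qed

lemma slp_size_ge_cat_nonterminals:
  assumes "is_slp V S \<rho>"
  shows "max 1 (2 * card (cat_nonterminals V \<rho>)) \<le> slp_size V \<rho>"
proof -
  have "finite V" "S \<in> V" using assms unfolding is_slp_def by blast+
  then have "card (cat_nonterminals V \<rho>) \<le> card V" "1 \<le> card V"
    unfolding cat_nonterminals_def by (auto intro: card_mono simp: Suc_le_eq card_gt_0_iff)
  then show ?thesis using slp_size_eq_card[OF \<open>finite V\<close>, of \<rho>] by simp
qed

definition splits_window :: "('v \<Rightarrow> ('a, 'v) rhs) \<Rightarrow> 'a list \<Rightarrow> nat \<Rightarrow> nat \<Rightarrow> 'v \<Rightarrow> bool" where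
  "splits_window \<rho> w a l Y \<longleftrightarrow> (\<exists>Y1 Y2 u1 u2 x z. \<rho> Y = Cat Y1 Y2 \<and>
     derives \<rho> Y1 u1 \<and> derives \<rho> Y2 u2 \<and> w = x @ u1 @ u2 @ z \<and>
     length x \<le> a \<and> a < length x + length u1 \<and> length x + length u1 < a + l \<and>
     a + l \<le> length x + length u1 + length u2)"

lemma splits_window_append_right:
  "splits_window \<rho> u a l Y \<Longrightarrow> splits_window \<rho> (u @ v) a l Y"
  unfolding splits_window_def by (metis append.assoc)

lemma splits_window_append_left:
  assumes "splits_window \<rho> v a l Y"
  shows "splits_window \<rho> (u @ v) (length u + a) l Y"
proof -
  obtain Y1 Y2 u1 u2 x z where "\<rho> Y = Cat Y1 Y2" "derives \<rho> Y1 u1" "derives \<rho> Y2 u2"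
    "v = x @ u1 @ u2 @ z" "length x \<le> a" "a < length x + length u1"
    "length x + length u1 < a + l" "a + l \<le> length x + length u1 + length u2"
    using assms unfolding splits_window_def by blast
  then show ?thesis
    unfolding splits_window_def
    by (intro exI[of _ Y1] exI[of _ Y2] exI[of _ u1] exI[of _ u2] exI[of _ "u @ x"] exI[of _ z])
      auto
qed

lemma derives_splits_window:
  assumes "derives \<rho> X w" "X \<in> V"
    and closed: "\<forall>X\<in>V. \<forall>Y Z. \<rho> X = Cat Y Z \<longrightarrow> Y \<in> V \<and> Z \<in> V"
    and "2 \<le> l" "a + l \<le> length w"
  shows "\<exists>Y\<in>V. splits_window \<rho> w a l Y"
  using assms(1,2,5)
proof (induction arbitrary: a rule: derives.induct)
  case (derives_term X c)
  then show ?case using \<open>2 \<le> l\<close> by simp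
next
  case (derives_cat X Y Z u v)
  have "Y \<in> V" "Z \<in> V" using closed derives_cat.hyps(1) derives_cat.prems(1) by blast+
  consider "a + l \<le> length u" | "length u \<le> a" | "a < length u" "length u < a + l"
    by linarith
  then show ?case
  proof cases
    case 1
    then show ?thesis
      using derives_cat.IH(1)[OF \<open>Y \<in> V\<close> 1] by (metis splits_window_append_right)
  next
    case 2
    then have "a - length u + l \<le> length v" using derives_cat.prems(2) by simp
    then obtain Y' where "Y' \<in> V" "splits_window \<rho> v (a - length u) l Y'"
      using derives_cat.IH(2)[OF \<open>Z \<in> V\<close>] by blast
    moreover have "length u + (a - length u) = a" using 2 by simp
    ultimately show ?thesis
      using splits_window_append_left[of \<rho> v "a - length u" l Y' u] by auto
  next
    case 3
    then have "splits_window \<rho> (u @ v) a l X"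
      unfolding splits_window_def
      using derives_cat.hyps derives_cat.prems(2) by (intro exI[of _ "[]"] exI) auto
    then show ?thesis using derives_cat.prems(1) by blast
  qed
qed

lemma take_drop_append_shift:
  "d + l \<le> length e \<Longrightarrow> take l (drop (length x + d) (x @ e @ z)) = take l (drop d e)"
  by simp

lemma splits_window_same_node_repeats:
  assumes "splits_window \<rho> w a l Y" "splits_window \<rho> w b l Y" "a + l \<le> b"
  shows "\<exists>c. a < c + l \<and> c < a + l \<and> take l (drop c w) = take l (drop b w)"
proof -
  obtain Y1 Y2 u1 u2 x z where Y: "\<rho> Y = Cat Y1 Y2" "derives \<rho> Y1 u1" "derives \<rho> Y2 u2"
    and w: "w = x @ (u1 @ u2) @ z"
    and a: "a < length x + length u1" "length x + length u1 < a + l"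
    using assms(1) unfolding splits_window_def by auto
  obtain Y1' Y2' u1' u2' x' z' where Y': "\<rho> Y = Cat Y1' Y2'" "derives \<rho> Y1' u1'" "derives \<rho> Y2' u2'"
    and w': "w = x' @ (u1' @ u2') @ z'"
    and b: "length x' \<le> b" "b < length x' + length u1'" "length x' + length u1' < b + l"
      "b + l \<le> length x' + length u1' + length u2'"
    using assms(2) unfolding splits_window_def by auto
  have "u1' = u1" "u2' = u2" using Y Y' derives_unique by fastforce+
  define d where "d = b - length x'"
  have "d + l \<le> length (u1 @ u2)" using b \<open>u1' = u1\<close> \<open>u2' = u2\<close> unfolding d_def by simp
  then have "take l (drop (length x + d) w) = take l (drop (length x' + d) w)"
    using take_drop_append_shift w w' \<open>u1' = u1\<close> \<open>u2' = u2\<close> by metis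
  moreover have "length x' + d = b" "d < length u1" "length u1 < d + l"
    using b \<open>u1' = u1\<close> unfolding d_def by auto
  ultimately show ?thesis
    using a by (intro exI[of _ "length x + d"]) auto
qed

(* l \<le> a keeps the repeated copy produced by splits_window_same_node_repeats inside R. *)
lemma card_unique_windows_le_card_cat_nonterminals:
  assumes slp: "is_slp V S \<rho>" and derivation: "derives \<rho> S (x @ R @ y)" and "2 \<le> l"
    and inside: "\<And>a. a \<in> A \<Longrightarrow> l \<le> a \<and> a + l \<le> length R"
    and disjoint: "\<And>a b. a \<in> A \<Longrightarrow> b \<in> A \<Longrightarrow> a < b \<Longrightarrow> a + l \<le> b"
    and unique: "\<And>a c. a \<in> A \<Longrightarrow> c + l \<le> length R \<Longrightarrow>
      take l (drop c R) = take l (drop a R) \<Longrightarrow> c = a"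
  shows "card A \<le> card (cat_nonterminals V \<rho>)"
proof -
  let ?w = "x @ R @ y"
  have "finite V" "S \<in> V" and closed: "\<forall>X\<in>V. \<forall>Y Z. \<rho> X = Cat Y Z \<longrightarrow> Y \<in> V \<and> Z \<in> V"
    using slp unfolding is_slp_def by blast+
  have "\<exists>Y\<in>V. splits_window \<rho> ?w (length x + a) l Y" if "a \<in> A" for a
    using derives_splits_window[OF derivation \<open>S \<in> V\<close> closed \<open>2 \<le> l\<close>] inside[OF that] by simp
  then obtain f where f: "\<And>a. a \<in> A \<Longrightarrow> f a \<in> V \<and> splits_window \<rho> ?w (length x + a) l (f a)"
    by metis
  have "f a \<noteq> f b" if ab: "a \<in> A" "b \<in> A" "a < b" for a b
  proof
    assume "f a = f b"
    then obtain c where c: "length x + a < c + l" "c < length x + a + l"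
      and repeat: "take l (drop c ?w) = take l (drop (length x + b) ?w)"
      using splits_window_same_node_repeats[of \<rho> ?w "length x + a" l "f a" "length x + b"]
        f[OF ab(1)] f[OF ab(2)] disjoint[OF ab] by auto
    define c' where "c' = c - length x"
    have c': "c = length x + c'" "c' + l \<le> length R"
      using c inside[OF ab(1)] inside[OF ab(2)] disjoint[OF ab] unfolding c'_def by auto
    have "take l (drop c' R) = take l (drop b R)"
      using repeat take_drop_append_shift[of c' l R x y] take_drop_append_shift[of b l R x y]
        c' inside[OF ab(2)] by simp
    then have "c' = b" using unique[OF ab(2) c'(2)] by blast
    then show False using c c' disjoint[OF ab] by linarith
  qed
  then have "inj_on f A" by (metis inj_onI linorder_neqE_nat)
  moreover have "f ` A \<subseteq> cat_nonterminals V \<rho>"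
    using f unfolding splits_window_def cat_nonterminals_def by blast
  moreover have "finite (cat_nonterminals V \<rho>)"
    using \<open>finite V\<close> unfolding cat_nonterminals_def by simp
  ultimately show ?thesis by (rule card_inj_on_le)
qed

lemma nat_eq_if_low_bits_eq:
  fixes x y :: nat
  assumes "x < 2 ^ n" "y < 2 ^ n" "\<And>k. k < n \<Longrightarrow> bit x k = bit y k"
  shows "x = y"
proof -
  have "take_bit n x = take_bit n y"
    by (rule bit_eqI) (auto simp add: bit_take_bit_iff assms(3))
  then show ?thesis
    using assms(1,2) by (simp add: take_bit_nat_eq_self)
qed

lemma bit_nat_iff_div_mod: "bit (x::nat) k \<longleftrightarrow> x div 2 ^ k mod 2 = 1"
  by (simp add: bit_iff_odd odd_iff_mod_2_eq_one)

lemma length_shiftbin_row: "length (shiftbin_row c0 c1 cd n r) = 2 ^ n * (n + 2)"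
  by (simp add: shiftbin_row_def)

lemma nth_shiftbin_row:
  assumes "c < 2 ^ n * (n + 2)"
  shows "shiftbin_row c0 c1 cd n r ! c =
    (if c div (n + 2) < r \<and> r \<le> c div (n + 2) + 2 ^ n then
       if c mod (n + 2) = 0 \<or> c mod (n + 2) = n + 1 then cd
       else if bit (r - c div (n + 2) - 1) (n - c mod (n + 2)) then c1 else c0
     else c0)"
  using assms by (simp add: shiftbin_row_def Let_def bit_nat_iff_div_mod)

lemma nth_shiftbin_row_block:
  assumes "j < 2 ^ n" "t < n + 2"
  shows "shiftbin_row c0 c1 cd n r ! (j * (n + 2) + t) =
    (if j < r \<and> r \<le> j + 2 ^ n then
       if t = 0 \<or> t = n + 1 then cd else if bit (r - j - 1) (n - t) then c1 else c0
     else c0)"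
proof -
  have "Suc j * (n + 2) \<le> 2 ^ n * (n + 2)"
    using assms(1) by (intro mult_right_mono) simp_all
  then have "j * (n + 2) + t < 2 ^ n * (n + 2)" using assms(2) by simp
  moreover have "(j * m + t) div m = j \<and> (j * m + t) mod m = t" if "t < m" for m
    using that by (simp add: add.commute[of "j * m"])
  ultimately show ?thesis
    using assms(2) by (simp only: nth_shiftbin_row)
qed

lemma shiftbin_row_delimiter_pair:
  fixes c0 c1 cd :: 'a and n r :: nat
  defines "R \<equiv> shiftbin_row c0 c1 cd n r"
  assumes "c0 \<noteq> c1" "c0 \<noteq> cd" "c1 \<noteq> cd" "1 \<le> n"
    and c: "c + (n + 2) \<le> length R" and "R ! c = cd" "R ! (c + (n + 1)) = cd"
  obtains m where "c = m * (n + 2)" "m < 2 ^ n" "m < r" "r \<le> m + 2 ^ n"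
proof -
  have len: "length R = 2 ^ n * (n + 2)" unfolding R_def by (rule length_shiftbin_row)
  define m s where "m = c div (n + 2)" and "s = c mod (n + 2)"
  have c_eq: "c = m * (n + 2) + s" and "s < n + 2"
    unfolding m_def s_def by (simp_all only: div_mult_mod_eq) simp
  have "m < 2 ^ n"
    using c len unfolding m_def by (simp add: less_mult_imp_div_less)
  then have active: "m < r" "r \<le> m + 2 ^ n" and "s = 0 \<or> s = n + 1"
    using \<open>R ! c = cd\<close> nth_shiftbin_row_block[OF \<open>m < 2 ^ n\<close> \<open>s < n + 2\<close>, of c0 c1 cd r]
      c_eq assms(2-4) unfolding R_def by (auto split: if_splits)
  moreover have "s \<noteq> n + 1"
  proof
    assume "s = n + 1"
    then have idx: "c + (n + 1) = Suc m * (n + 2) + n"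
      and "Suc m * (n + 2) < 2 ^ n * (n + 2)"
      using c_eq c len by (simp_all add: algebra_simps)
    then have "Suc m < 2 ^ n" by (simp only: mult_less_cancel2)
    then have "R ! (Suc m * (n + 2) + n) \<noteq> cd"
      using nth_shiftbin_row_block[of "Suc m" n n c0 c1 cd r] assms(2-5)
      unfolding R_def by auto
    with \<open>R ! (c + (n + 1)) = cd\<close> show False by (metis idx)
  qed
  ultimately show thesis
    using that \<open>m < 2 ^ n\<close> c_eq by simp
qed

lemma shiftbin_row_active_block_unique:
  fixes c0 c1 cd :: 'a and n r :: nat
  defines "R \<equiv> shiftbin_row c0 c1 cd n r"
  assumes "c0 \<noteq> c1" "c0 \<noteq> cd" "c1 \<noteq> cd" "1 \<le> n"
    and active: "j < 2 ^ n" "j < r" "r \<le> j + 2 ^ n"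
    and c: "c + (n + 2) \<le> length R"
    and eq: "take (n + 2) (drop c R) = take (n + 2) (drop (j * (n + 2)) R)"
  shows "c = j * (n + 2)"
proof -
  have "Suc j * (n + 2) \<le> 2 ^ n * (n + 2)"
    using active(1) by (intro mult_right_mono) simp_all
  then have same: "R ! (c + t) = R ! (j * (n + 2) + t)" if "t < n + 2" for t
    using arg_cong[OF eq, of "\<lambda>s. s ! t"] that c unfolding R_def
    by (simp add: length_shiftbin_row)
  have block_j: "R ! (j * (n + 2) + t) =
      (if t = 0 \<or> t = n + 1 then cd else if bit (r - j - 1) (n - t) then c1 else c0)"
    if "t < n + 2" for t
    using nth_shiftbin_row_block[OF active(1) that, of c0 c1 cd r] active unfolding R_def by simp
  obtain m where m: "c = m * (n + 2)" "m < 2 ^ n" "m < r" "r \<le> m + 2 ^ n"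
    using shiftbin_row_delimiter_pair[OF assms(2-5) c[unfolded R_def]]
      same[of 0] block_j[of 0] same[of "n + 1"] block_j[of "n + 1"] unfolding R_def by auto
  have "bit (r - m - 1) k = bit (r - j - 1) k" if "k < n" for k
  proof -
    have "n - k < n + 2" "n - k \<noteq> 0" "n - k \<noteq> n + 1" "n - (n - k) = k" using that by auto
    then show ?thesis
      using same[of "n - k"] block_j[of "n - k"] m assms(2)
        nth_shiftbin_row_block[OF m(2), of "n - k" c0 c1 cd r] unfolding R_def
      by (auto split: if_splits)
  qed
  then have "r - m - 1 = r - j - 1"
    using m active by (intro nat_eq_if_low_bits_eq[of _ n]) auto
  then have "m = j" using m active by simp
  then show ?thesis using m(1) by simp
qed

lemma card_cat_nonterminals_ge_shiftbin_blocks: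
  fixes c0 c1 cd :: 'a
  assumes "c0 \<noteq> c1" "c0 \<noteq> cd" "c1 \<noteq> cd" "1 \<le> n"
    and "is_slp V S \<rho>" "derives \<rho> S (x @ shiftbin_row c0 c1 cd n i @ y)"
  shows "min i (2 ^ n) - max 1 (i - 2 ^ n) \<le> card (cat_nonterminals V \<rho>)"
proof -
  let ?R = "shiftbin_row c0 c1 cd n i"
  define L where "L = n + 2"
  define B where "B = {max 1 (i - 2 ^ n) ..< min i (2 ^ n)}"
  have len: "length ?R = 2 ^ n * L" unfolding L_def by (rule length_shiftbin_row)
  have "0 < L" unfolding L_def by simp
  have "card ((\<lambda>j. j * L) ` B) \<le> card (cat_nonterminals V \<rho>)"
  proof (rule card_unique_windows_le_card_cat_nonterminals)
    fix a assume "a \<in> (\<lambda>j. j * L) ` B"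
    then obtain j where "j \<in> B" "a = j * L" by blast
    moreover from \<open>j \<in> B\<close> have "1 \<le> j" "Suc j \<le> 2 ^ n" unfolding B_def by auto
    ultimately show "L \<le> a \<and> a + L \<le> length ?R"
      using mult_le_mono1[of 1 j L] mult_le_mono1[of "Suc j" "2 ^ n" L] len by simp
  next
    fix a b assume "a \<in> (\<lambda>j. j * L) ` B" "b \<in> (\<lambda>j. j * L) ` B" "a < b"
    then obtain j k where "a = j * L" "b = k * L" by blast
    with \<open>a < b\<close> have "Suc j \<le> k" by simp
    then show "a + L \<le> b"
      using mult_le_mono1[of "Suc j" k L] \<open>a = j * L\<close> \<open>b = k * L\<close> by simp
  next
    fix a c assume "a \<in> (\<lambda>j. j * L) ` B" "c + L \<le> length ?R"
      "take L (drop c ?R) = take L (drop a ?R)"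
    then show "c = a"
      using shiftbin_row_active_block_unique[OF assms(1-4)] unfolding B_def L_def by auto
  qed (use assms(5,6) L_def in auto)
  moreover have "card ((\<lambda>j. j * L) ` B) = card B"
    using \<open>0 < L\<close> by (simp add: card_image inj_on_def)
  ultimately show ?thesis unfolding B_def by simp
qed

theorem mainTheorem6:
  fixes c0 c1 cd :: 'a
    and V :: "'v set" and S :: 'v and \<rho> :: "'v \<Rightarrow> ('a, 'v) rhs"
    and n i :: nat and w :: "'a list"
  assumes "c0 \<noteq> c1" "c0 \<noteq> cd" "c1 \<noteq> cd"
    and "n \<ge> 1"
    and "1 \<le> i" "i \<le> 2 * 2 ^ n"
    and "is_slp V S \<rho>"
    and "derives \<rho> S w"
    and "sublist (shiftbin_row c0 c1 cd n i) w"
  shows "slp_size V \<rho> \<ge> min i (2 * 2 ^ n - i + 1)"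
proof -
  obtain x y where "w = x @ shiftbin_row c0 c1 cd n i @ y"
    using assms(9) unfolding sublist_def by blast
  with assms(8) have "derives \<rho> S (x @ shiftbin_row c0 c1 cd n i @ y)" by simp
  then have "min i (2 ^ n) - max 1 (i - 2 ^ n) \<le> card (cat_nonterminals V \<rho>)"
    by (rule card_cat_nonterminals_ge_shiftbin_blocks[OF assms(1-4,7)])
  moreover have "max 1 (2 * card (cat_nonterminals V \<rho>)) \<le> slp_size V \<rho>"
    using slp_size_ge_cat_nonterminals[OF assms(7)] .
  ultimately show ?thesis
    using assms(5,6) by (auto simp: min_def max_def split: if_splits)
qed

end
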